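(* Let $n\ge3$. Every nonempty element of $K^{\infty}_n$ has a unique canonical form (its smallest representative word in length-lexicographic order with $y_1<\cdots<y_n$), and the canonical forms are exactly the words $$y^{a_0}_{i_1}y^{a_1}_{i_1-1}\cdots y^{a_{k_1}}_{i_1-k_1}\;y^{b_0}_{i_2}y^{b_1}_{i_2-1}\cdots y^{b_{k_2}}_{i_2-k_2}\cdots y^{h_0}_{i_p}y^{h_1}_{i_p-1}\cdots y^{h_{k_p}}_{i_p-k_p}$$ with all exponents positive and $i_j-k_j<i_{j+1}$ for $j=1,\dots,p-1$, where in addition, as a special case, a factor $y_n^{h}$ may be immediately followed by a factor $y_{n-2}^{j}$. Equivalently, the canonical forms are the words in which every two consecutive letters $y_ay_b$ satisfy $b\ge a-1$ or $(a,b)=(n,n-2)$.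
   Context: $K^{\infty}_n=\langle y_1,\dots,y_n\mid y_iy_j=y_jy_i\ (j+2\le i\le n-1),\ y_ny_k=y_ky_n\ (1\le k\le n-3)\rangle$. *)

theory Defs
  imports Main
begin

text \<open>Words over the alphabet y_1,...,y_n are lists of naturals in {1..n}.
  Defining relations of K^infty_n: y_i y_j = y_j y_i whenever kcomm n i j.\<close>

definition kcomm :: "nat \<Rightarrow> nat \<Rightarrow> nat \<Rightarrow> bool" where
  "kcomm n i j \<longleftrightarrow> (j + 2 \<le> i \<and> i \<le> n - 1) \<or> (i = n \<and> 1 \<le> j \<and> j \<le> n - 3)"

inductive kstep :: "nat \<Rightarrow> nat list \<Rightarrow> nat list \<Rightarrow> bool" for n where
  "kcomm n i j \<Longrightarrow> kstep n (u @ [i, j] @ v) (u @ [j, i] @ v)"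

definition keq :: "nat \<Rightarrow> nat list \<Rightarrow> nat list \<Rightarrow> bool" where
  "keq n = equivclp (kstep n)"

definition shortlex :: "(nat list \<times> nat list) set" where
  "shortlex = lenlex {(a, b). a < b}"

definition kcanon_of :: "nat \<Rightarrow> nat list \<Rightarrow> nat list \<Rightarrow> bool" where
  "kcanon_of n w v \<longleftrightarrow> keq n v w \<and> (\<forall>v'. keq n v' w \<longrightarrow> v' \<noteq> v \<longrightarrow> (v, v') \<in> shortlex)"

definition kcanonical :: "nat \<Rightarrow> nat list \<Rightarrow> bool" where
  "kcanonical n v \<longleftrightarrow> kcanon_of n v v"

end

theory Submission
  imports Defs
begin

text \<open>Shortlex is a well-founded strict total order, so every word has a unique
  smallest equivalent word. Swapping an adjacent pair y_i y_j with kcomm n i j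
  decreases a word, so a canonical form contains no such pair; the pairs allowed
  instead are exactly those of the statement. Conversely, two words without such
  pairs that represent the same element coincide: for every two non-commuting
  letters the subsequence formed by them is invariant, so if the words started
  with letters a < b, every letter of the second word before its first a would
  commute with a. That segment starts above a and ends below a, so some letter
  x > a is directly followed by a letter y < a; but x, a and y commuting pairwise
  in that order forces x and y to commute.\<close>

lemma kcomm_less: "kcomm n i j \<Longrightarrow> j < i"
  unfolding kcomm_def by auto

lemma kcomm_trans: "kcomm n x a \<Longrightarrow> kcomm n a y \<Longrightarrow> 1 \<le> y \<Longrightarrow> kcomm n x y"
  unfolding kcomm_def by auto

lemma not_kcomm_iff:
  assumes "i \<in> {1..n}" "j \<in> {1..n}"
  shows "\<not> kcomm n i j \<longleftrightarrow> i \<le> j + 1 \<or> (i = n \<and> j = n - 2)"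
  using assms unfolding kcomm_def by auto

definition kindep :: "nat \<Rightarrow> nat \<Rightarrow> nat \<Rightarrow> bool" where
  "kindep n a b \<longleftrightarrow> kcomm n a b \<or> kcomm n b a"

lemma not_kindep_refl: "\<not> kindep n a a"
  unfolding kindep_def by (auto dest: kcomm_less)

lemma shortlex_irrefl: "(x, x) \<notin> shortlex"
  unfolding shortlex_def by (rule lenlex_irreflexive) auto

lemma shortlex_trans: "(x, y) \<in> shortlex \<Longrightarrow> (y, z) \<in> shortlex \<Longrightarrow> (x, z) \<in> shortlex"
  unfolding shortlex_def by (erule lenlex_trans) (auto simp: trans_def)

lemma shortlex_total: "x \<noteq> y \<Longrightarrow> (x, y) \<in> shortlex \<or> (y, x) \<in> shortlex"
proof -
  have "total (lenlex {(a::nat, b). a < b})"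
    by (rule total_lenlex) (auto simp: total_on_def)
  then show "x \<noteq> y \<Longrightarrow> ?thesis"
    unfolding shortlex_def total_on_def by blast
qed

lemma wf_shortlex: "wf shortlex"
  unfolding shortlex_def by (rule wf_lenlex) (rule wf_less)

lemma shortlex_swap: "kcomm n i j \<Longrightarrow> (u @ [j, i] @ v, u @ [i, j] @ v) \<in> shortlex"
proof -
  assume "kcomm n i j"
  then have "([j, i] @ v, [i, j] @ v) \<in> lenlex {(a::nat, b). a < b}"
    by (intro lenlex_append1) (auto simp: Cons_lenlex_iff dest: kcomm_less)
  then show ?thesis
    unfolding shortlex_def by (simp add: irrefl_def)
qed

lemma kcanon_of_exists: "\<exists>v. kcanon_of n w v"
proof -
  obtain v where "keq n v w" "\<And>v'. (v', v) \<in> shortlex \<Longrightarrow> \<not> keq n v' w"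
    using wfE_min[OF wf_shortlex, of w "{v. keq n v w}"] unfolding keq_def by auto
  then have "kcanon_of n w v"
    unfolding kcanon_of_def using shortlex_total by blast
  then show ?thesis ..
qed

lemma kcanon_of_unique: "kcanon_of n w v \<Longrightarrow> kcanon_of n w v' \<Longrightarrow> v = v'"
  unfolding kcanon_of_def using shortlex_trans shortlex_irrefl by blast

abbreviation kreduced :: "nat \<Rightarrow> nat list \<Rightarrow> bool" where
  "kreduced n \<equiv> successively (\<lambda>i j. \<not> kcomm n i j)"

lemma not_successively_split:
  "\<not> successively P xs \<Longrightarrow> \<exists>u x y v. xs = u @ [x, y] @ v \<and> \<not> P x y"
proof (induction xs rule: induct_list012)
  case (3 x y zs)
  show ?case
  proof (cases "P x y")
    case True
    with "3.prems" obtain u a b v where "y # zs = u @ [a, b] @ v" "\<not> P a b"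
      using "3.IH"(2) by auto
    then show ?thesis by (metis append_Cons)
  next
    case False
    then show ?thesis by (metis append_Nil append_Cons)
  qed
qed simp_all

lemma kcanon_of_kreduced:
  assumes canon: "kcanon_of n w v"
  shows "kreduced n v"
proof (rule ccontr)
  assume "\<not> kreduced n v"
  then obtain u i j t where v: "v = u @ [i, j] @ t" and ij: "kcomm n i j"
    using not_successively_split[of "\<lambda>i j. \<not> kcomm n i j" v] by auto
  define v' where "v' = u @ [j, i] @ t"
  have "kstep n v v'"
    unfolding v v'_def using ij by (rule kstep.intros)
  then have "keq n v' w"
    using canon unfolding kcanon_of_def keq_def by (blast intro: equivclp_trans)
  moreover have "v' \<noteq> v"
    using kcomm_less[OF ij] unfolding v v'_def by simp
  ultimately have "(v, v') \<in> shortlex"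
    using canon unfolding kcanon_of_def by blast
  moreover have "(v', v) \<in> shortlex"
    unfolding v v'_def by (rule shortlex_swap[OF ij])
  ultimately show False
    using shortlex_trans shortlex_irrefl by blast
qed

definition letter_proj :: "nat \<Rightarrow> nat \<Rightarrow> nat list \<Rightarrow> nat list" where
  "letter_proj a b w = filter (\<lambda>x. x = a \<or> x = b) w"

definition kproj_equiv :: "nat \<Rightarrow> nat list \<Rightarrow> nat list \<Rightarrow> bool" where
  "kproj_equiv n v v' \<longleftrightarrow> (\<forall>a b. \<not> kindep n a b \<longrightarrow> letter_proj a b v = letter_proj a b v')"

lemma kproj_equiv_sym: "kproj_equiv n v v' \<Longrightarrow> kproj_equiv n v' v"
  unfolding kproj_equiv_def by simp

lemma kproj_equiv_ConsD:
  assumes "kproj_equiv n (a # v) (a # v')"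
  shows "kproj_equiv n v v'"
  unfolding kproj_equiv_def
proof (intro allI impI)
  fix c d
  assume "\<not> kindep n c d"
  then have "letter_proj c d (a # v) = letter_proj c d (a # v')"
    using assms unfolding kproj_equiv_def by blast
  then show "letter_proj c d v = letter_proj c d v'"
    by (simp add: letter_proj_def split: if_splits)
qed

lemma kproj_equiv_mem:
  assumes "kproj_equiv n v v'" "a \<in> set v"
  shows "a \<in> set v'"
proof -
  have "letter_proj a a v \<noteq> []"
    using assms(2) unfolding letter_proj_def by (auto simp: filter_empty_conv)
  then have "letter_proj a a v' \<noteq> []"
    using assms(1) not_kindep_refl unfolding kproj_equiv_def by metis
  then show ?thesis
    unfolding letter_proj_def by (auto simp: filter_empty_conv)
qed

lemma kstep_set: "kstep n x y \<Longrightarrow> set x = set y"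
  by (induction rule: kstep.induct) auto

lemma kstep_kproj_equiv: "kstep n x y \<Longrightarrow> kproj_equiv n x y"
  by (induction rule: kstep.induct)
     (auto simp: kproj_equiv_def letter_proj_def kindep_def dest: kcomm_less)

lemma keq_set: "keq n x y \<Longrightarrow> set x = set y"
  unfolding keq_def by (induction rule: equivclp_induct) (auto dest: kstep_set)

lemma keq_kproj_equiv: "keq n x y \<Longrightarrow> kproj_equiv n x y"
  unfolding keq_def
proof (induction rule: equivclp_induct)
  case base
  then show ?case by (simp add: kproj_equiv_def)
next
  case (step y z)
  then show ?case
    by (auto simp: kproj_equiv_def dest!: kstep_kproj_equiv)
qed

lemma kreduced_no_descent_around:
  assumes "\<forall>c \<in> set (x # xs). kindep n a c \<and> 1 \<le> c" "a < x" "kreduced n (x # xs @ [a])"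
  shows False
  using assms
proof (induction xs arbitrary: x)
  case Nil
  then show ?case by (auto simp: kindep_def dest: kcomm_less)
next
  case (Cons y xs)
  have xy: "\<not> kcomm n x y" and xa: "kcomm n x a"
    using Cons.prems by (auto simp: kindep_def dest: kcomm_less)
  show ?case
  proof (cases "a < y")
    case True
    then show ?thesis using Cons by auto
  next
    case False
    with Cons.prems have "kcomm n a y" "1 \<le> y"
      by (auto simp: kindep_def dest: kcomm_less)
    then show ?thesis using kcomm_trans[OF xa] xy by blast
  qed
qed

lemma kreduced_hd_not_less:
  assumes red: "kreduced n (b # v')" and pos: "0 \<notin> set (b # v')"
    and equiv: "kproj_equiv n (a # v) (b # v')" and "a < b"
  shows False
proof -
  have "a \<in> set (b # v')"
    using kproj_equiv_mem[OF equiv] by simp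
  then obtain xs zs where split: "b # v' = xs @ a # zs" and "a \<notin> set xs"
    by (meson split_list_first)
  with \<open>a < b\<close> obtain xs' where xs: "xs = b # xs'"
    by (cases xs) auto
  have "kindep n a c" if c: "c \<in> set xs" for c
  proof (rule ccontr)
    assume dep: "\<not> kindep n a c"
    obtain p q where "xs = p @ c # q" "c \<notin> set p"
      using c by (meson split_list_first)
    then have "letter_proj a c (b # v') = c # letter_proj a c (q @ a # zs)"
      unfolding split letter_proj_def using \<open>a \<notin> set xs\<close> by (auto simp: filter_empty_conv)
    moreover have "letter_proj a c (a # v) = a # letter_proj a c v"
      by (simp add: letter_proj_def)
    ultimately show False
      using equiv dep c \<open>a \<notin> set xs\<close> unfolding kproj_equiv_def by auto
  qed
  moreover have "kreduced n (b # xs' @ [a])"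
    using red successively_append_iff[of _ "b # xs' @ [a]" zs] unfolding split xs by simp
  moreover have "\<forall>c \<in> set (b # xs'). 1 \<le> c"
    using pos unfolding split xs by (auto simp: Suc_le_eq) (metis neq0_conv)
  ultimately show False
    using kreduced_no_descent_around[of b xs' n a] \<open>a < b\<close> unfolding xs by auto
qed

lemma kreduced_kproj_equiv_eq:
  "kreduced n v \<Longrightarrow> kreduced n v' \<Longrightarrow> 0 \<notin> set v \<Longrightarrow> 0 \<notin> set v'
    \<Longrightarrow> kproj_equiv n v v' \<Longrightarrow> v = v'"
proof (induction v arbitrary: v')
  case Nil
  then show ?case
    using kproj_equiv_mem[OF kproj_equiv_sym[OF Nil.prems(5)]] by (cases v') auto
next
  case (Cons a v)
  then obtain b v'' where v': "v' = b # v''"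
    using kproj_equiv_mem[OF Cons.prems(5), of a] by (cases v') auto
  consider "a = b" | "a < b" | "b < a" by linarith
  then show ?case
  proof cases
    case 1
    then show ?thesis
      using Cons unfolding v' by (auto simp: successively_Cons dest: kproj_equiv_ConsD)
  next
    case 2
    then show ?thesis
      using Cons.prems kreduced_hd_not_less unfolding v' by blast
  next
    case 3
    then show ?thesis
      using Cons.prems kreduced_hd_not_less kproj_equiv_sym unfolding v' by blast
  qed
qed

lemma kcanonical_iff_kreduced:
  assumes "0 \<notin> set v"
  shows "kcanonical n v \<longleftrightarrow> kreduced n v"
proof
  assume "kcanonical n v"
  then show "kreduced n v"
    unfolding kcanonical_def by (rule kcanon_of_kreduced)
next
  assume red: "kreduced n v"
  obtain m where m: "kcanon_of n v m"
    using kcanon_of_exists by blast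
  then have "keq n m v"
    unfolding kcanon_of_def by simp
  then have "m = v"
    using kreduced_kproj_equiv_eq[OF kcanon_of_kreduced[OF m] red] assms
      keq_set[of n m v] keq_kproj_equiv[of n m v] by simp
  then show "kcanonical n v"
    using m unfolding kcanonical_def by simp
qed

lemma kreduced_iff_nth:
  assumes "set v \<subseteq> {1..n}"
  shows "kreduced n v \<longleftrightarrow> (\<forall>i. Suc i < length v \<longrightarrow>
           v ! i \<le> v ! Suc i + 1 \<or> (v ! i = n \<and> v ! Suc i = n - 2))"
proof -
  have "\<not> kcomm n (v ! i) (v ! Suc i) \<longleftrightarrow> v ! i \<le> v ! Suc i + 1 \<or> (v ! i = n \<and> v ! Suc i = n - 2)"
    if "Suc i < length v" for i
  proof (rule not_kcomm_iff)
    show "v ! i \<in> {1..n}" "v ! Suc i \<in> {1..n}"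
      using that assms nth_mem[of i v] nth_mem[of "Suc i" v] by (simp_all add: subset_iff)
  qed
  then show ?thesis
    unfolding successively_conv_nth by blast
qed

theorem proposition2:
  fixes n :: nat
  assumes "n \<ge> 3"
  shows "(\<forall>w. w \<noteq> [] \<and> set w \<subseteq> {1..n} \<longrightarrow> (\<exists>!v. kcanon_of n w v))
       \<and> (\<forall>v. v \<noteq> [] \<and> set v \<subseteq> {1..n} \<longrightarrow>
            (kcanonical n v \<longleftrightarrow>
              (\<forall>i. Suc i < length v \<longrightarrow>
                  v ! i \<le> v ! Suc i + 1 \<or> (v ! i = n \<and> v ! Suc i = n - 2))))"
proof (intro conjI allI impI)
  fix w
  show "\<exists>!v. kcanon_of n w v"
    using kcanon_of_exists kcanon_of_unique by metis
next
  fix v :: "nat list"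
  assume v: "v \<noteq> [] \<and> set v \<subseteq> {1..n}"
  then have "kcanonical n v \<longleftrightarrow> kreduced n v"
    by (intro kcanonical_iff_kreduced) auto
  also have "\<dots> \<longleftrightarrow> (\<forall>i. Suc i < length v \<longrightarrow>
                  v ! i \<le> v ! Suc i + 1 \<or> (v ! i = n \<and> v ! Suc i = n - 2))"
    using v by (intro kreduced_iff_nth) auto
  finally show "kcanonical n v \<longleftrightarrow> (\<forall>i. Suc i < length v \<longrightarrow>
                  v ! i \<le> v ! Suc i + 1 \<or> (v ! i = n \<and> v ! Suc i = n - 2))" .
qed

end
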